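(* Let $0<q<1$, $\alpha>-1$ and let $n\ge0$ be an integer. The matrix $\big((q^{\alpha+1};q)_{j+k}\big)_{j,k=0}^{n}$ is invertible and \[ \big((q^{\alpha+1};q)_{j+k}\big)_{j,k=0}^{n}{}^{-1}=\left(\sum_{m=0}^{n}\frac{q^{j+k}\,(q^{\alpha+1};q)_m\,(q^{-m};q)_j\,(q^{-m};q)_k}{(q;q)_j\,(q;q)_k\,(q^{\alpha+1};q)_j\,(q^{\alpha+1};q)_k\,(q;q)_m\,q^{(\alpha+1)m}}\right)_{j,k=0}^{n}. \]
   Context: $(a;q)_m=\prod_{i=0}^{m-1}(1-aq^i)$ for integers $m\ge0$ (empty product $=1$); in particular $(q^{-m};q)_j=0$ for $j>m$. *)

theory Defs
  imports "Jordan_Normal_Form.Matrix"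
begin

definition qpoch :: "real \<Rightarrow> real \<Rightarrow> nat \<Rightarrow> real" where
  "qpoch a q m = (\<Prod>i<m. (1 - a * q ^ i))"

end

theory Submission
  imports Defs "Jordan_Normal_Form.Determinant"
begin

(* The rows of the lower triangular matrix U with entries
     U_{m,j} = q^j (q^{-m};q)_j / ((q;q)_j (a;q)_j)
   are A-orthogonal (discrete orthogonality of little q-Jacobi polynomials):
     U A U^T = diag(h_m),   h_m = a^m (q;q)_m / (a;q)_m.
   Hence A^{-1} = U^T diag(1/h_m) U, which is the matrix B of the theorem. *)

lemma qpoch_0 [simp]: "qpoch b q 0 = 1"
  by (simp add: qpoch_def)

lemma qpoch_Suc: "qpoch b q (Suc j) = qpoch b q j * (1 - b * q ^ j)"
  by (simp add: qpoch_def)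

lemma qpoch_Suc_shift: "qpoch b q (Suc j) = (1 - b) * qpoch (b * q) q j"
  unfolding qpoch_def by (subst prod.lessThan_Suc_shift) (simp add: mult.assoc)

lemma qpoch_add: "qpoch b q (j + k) = qpoch b q j * qpoch (b * q ^ j) q k"
  by (induct k) (simp_all add: qpoch_Suc power_add mult_ac)

lemma qpoch_eq_0: "i < j \<Longrightarrow> b * q ^ i = 1 \<Longrightarrow> qpoch b q j = 0"
  unfolding qpoch_def by (rule prod_zero) auto

lemma qpoch_pos:
  assumes "0 < b" "b < 1" "0 < q" "q \<le> 1"
  shows "qpoch b q j > 0"
  unfolding qpoch_def
proof (rule prod_pos)
  fix i
  have "b * q ^ i \<le> b"
    using assms mult_left_le[of "q ^ i" b] by (simp add: power_le_one)
  then show "0 < 1 - b * q ^ i" using assms by linarith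
qed

lemma qpoch_reverse: "qpoch b q m = (\<Prod>t<m. 1 - b * q ^ (m - 1 - t))"
  unfolding qpoch_def
  by (rule prod.reindex_bij_witness[where i="\<lambda>t. m - 1 - t" and j="\<lambda>t. m - 1 - t"]) auto

lemma qpoch_inverse_power_vanish:
  assumes "q \<noteq> 0" "m < j"
  shows "qpoch (inverse (q ^ m)) q j = 0"
proof (rule qpoch_eq_0[OF assms(2)])
  show "inverse (q ^ m) * q ^ m = 1" using assms(1) by simp
qed

lemma qpoch_inverse_power_reflect:
  assumes "q \<noteq> 0"
  shows "qpoch (inverse (q ^ m)) q m * (\<Prod>t<m. - (q ^ (t + 1))) = qpoch q q m"
proof -
  have "qpoch (inverse (q ^ m)) q m * (\<Prod>t<m. - (q ^ (t + 1)))
      = (\<Prod>t<m. (1 - inverse (q ^ m) * q ^ (m - 1 - t)) * - (q ^ (t + 1)))"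
    unfolding qpoch_reverse[of "inverse (q ^ m)"] by (simp only: prod.distrib)
  also have "\<dots> = (\<Prod>t<m. 1 - q * q ^ t)"
  proof (rule prod.cong)
    fix t assume "t \<in> {..<m}"
    then have "m - 1 - t + (t + 1) = m" by simp
    then have "q ^ (m - 1 - t) * q ^ (t + 1) = q ^ m"
      by (metis power_add)
    then show "(1 - inverse (q ^ m) * q ^ (m - 1 - t)) * - (q ^ (t + 1)) = 1 - q * q ^ t"
      using assms by (simp add: algebra_simps)
  qed simp
  finally show ?thesis by (simp add: qpoch_def)
qed

section \<open>The terminating q-binomial theorem\<close>

text \<open>The coefficients \<open>(q^{-m};q)_j / (q;q)_j\<close>; up to the factor
  \<open>(-1)^j q^{j(j-1)/2 - mj}\<close> these are Gaussian binomial coefficients.\<close>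
definition qbin_coeff :: "real \<Rightarrow> nat \<Rightarrow> nat \<Rightarrow> real" where
  "qbin_coeff q m j = qpoch (inverse (q ^ m)) q j / qpoch q q j"

lemma qbin_coeff_0 [simp]: "qbin_coeff q m 0 = 1"
  by (simp add: qbin_coeff_def)

lemma qbin_coeff_vanish:
  assumes "q \<noteq> 0" "m < j"
  shows "qbin_coeff q m j = 0"
  unfolding qbin_coeff_def qpoch_inverse_power_vanish[OF assms] by simp

lemma qbin_coeff_Suc:
  assumes "0 < q" "q < 1"
  shows "qbin_coeff q (Suc m) (Suc j)
           = qbin_coeff q m (Suc j) - inverse (q ^ Suc m) * qbin_coeff q m j"
proof -
  let ?x = "inverse (q ^ m)" and ?y = "inverse (q ^ Suc m)"
  have x: "?y * q = ?x" and xq: "?y * q ^ Suc j = ?x * q ^ j"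
    using assms by (simp_all add: field_simps)
  have rearrange: "(1 - y) * P = P * (1 - x * r) - y * (1 - s) * P"
    if "y * s = x * r" for x y r s P :: real
  proof -
    have "y * s * P = x * r * P" using that by simp
    then show ?thesis by (auto simp: algebra_simps)
  qed
  have numerators: "qpoch ?y q (Suc j) = qpoch ?x q (Suc j) - ?y * (1 - q ^ Suc j) * qpoch ?x q j"
    unfolding qpoch_Suc_shift[of ?y] qpoch_Suc[of ?x] x by (rule rearrange[OF xq])
  have "qpoch q q j \<noteq> 0" "1 - q ^ Suc j \<noteq> 0"
    using assms qpoch_pos[of q q j] power_Suc_less_one[OF assms, of j] by auto
  then have "?y * (1 - q ^ Suc j) * qpoch ?x q j / qpoch q q (Suc j)
      = ?y * (qpoch ?x q j / qpoch q q j)"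
    unfolding qpoch_Suc[of q q j] by simp
  then show ?thesis
    unfolding qbin_coeff_def numerators by (simp add: diff_divide_distrib)
qed

theorem q_binomial_terminating:
  assumes "0 < q" "q < 1"
  shows "(\<Sum>j\<le>m. qbin_coeff q m j * z ^ j) = qpoch (z * inverse (q ^ m)) q m"
proof (induct m)
  case 0
  then show ?case by simp
next
  case (Suc m)
  let ?c = "qbin_coeff q"
  have "(\<Sum>j\<le>Suc m. ?c (Suc m) j * z ^ j) = 1 + (\<Sum>j\<le>m. ?c (Suc m) (Suc j) * z ^ Suc j)"
    by (subst sum.atMost_Suc_shift) simp
  also have "\<dots> = (1 + (\<Sum>j\<le>m. ?c m (Suc j) * z ^ Suc j))
                   - inverse (q ^ Suc m) * z * (\<Sum>j\<le>m. ?c m j * z ^ j)"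
    by (simp add: qbin_coeff_Suc[OF assms] algebra_simps sum_subtractf sum_distrib_left)
  also have "1 + (\<Sum>j\<le>m. ?c m (Suc j) * z ^ Suc j) = (\<Sum>j\<le>Suc m. ?c m j * z ^ j)"
    by (subst sum.atMost_Suc_shift) simp
  also have "\<dots> = (\<Sum>j\<le>m. ?c m j * z ^ j)"
    using qbin_coeff_vanish[of q m "Suc m"] assms by simp
  also have "\<dots> - inverse (q ^ Suc m) * z * (\<Sum>j\<le>m. ?c m j * z ^ j)
      = (1 - z * inverse (q ^ Suc m)) * qpoch (z * inverse (q ^ Suc m) * q) q m"
    using Suc assms by (simp add: field_simps)
  also have "\<dots> = qpoch (z * inverse (q ^ Suc m)) q (Suc m)"
    by (rule qpoch_Suc_shift[symmetric])
  finally show ?case .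
qed

text \<open>For \<open>k = 0\<close>
  this is a terminating q-binomial sum; raising \<open>k\<close> by one lowers the total
  weight \<open>i + k\<close> by a linear recurrence.\<close>
definition S :: "real \<Rightarrow> real \<Rightarrow> nat \<Rightarrow> nat \<Rightarrow> nat \<Rightarrow> real" where
  "S q a m k i = (\<Sum>j\<le>m. qbin_coeff q m j * (q ^ (i + 1)) ^ j * qpoch (a * q ^ j) q k)"

lemma S_0:
  assumes "0 < q" "q < 1"
  shows "S q a m 0 i = qpoch (q ^ (i + 1) * inverse (q ^ m)) q m"
  using q_binomial_terminating[OF assms, of m "q ^ (i + 1)"] by (simp add: S_def)

text \<open>From \<open>(aq^j;q)_{k+1} = (aq^j;q)_k (1 - aq^k q^j)\<close>.\<close>
lemma S_Suc: "S q a m (Suc k) i = S q a m k i - a * q ^ k * S q a m k (Suc i)"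
proof -
  have "(q ^ (Suc i + 1)) ^ j = q ^ j * (q ^ (i + 1)) ^ j" for j
    by (simp flip: power_mult_distrib)
  then show ?thesis
    unfolding S_def
    by (simp add: qpoch_Suc sum_subtractf sum_distrib_left algebra_simps power_add)
qed

text \<open>For \<open>i < m\<close> the product \<open>(q^{i+1-m};q)_m\<close> contains the factor \<open>1 - q^0\<close>.\<close>
lemma S_vanish:
  assumes "0 < q" "q < 1"
  shows "i + k < m \<Longrightarrow> S q a m k i = 0"
proof (induct k arbitrary: i)
  case 0
  have "i + 1 + (m - 1 - i) = m" using 0 by simp
  then have "q ^ (i + 1) * q ^ (m - 1 - i) = q ^ m" by (metis power_add)
  then have "q ^ (i + 1) * inverse (q ^ m) * q ^ (m - 1 - i) = q ^ m * inverse (q ^ m)"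
    by (metis mult.assoc mult.commute)
  also have "\<dots> = 1" using assms by simp
  finally have "q ^ (i + 1) * inverse (q ^ m) * q ^ (m - 1 - i) = 1" .
  then show ?case
    using S_0[OF assms] qpoch_eq_0[of "m - 1 - i" m] 0 by simp
next
  case (Suc k)
  then show ?case by (simp add: S_Suc)
qed

text \<open>On the line \<open>i + k = m\<close> only the second term of the recurrence survives.\<close>
lemma S_diagonal:
  assumes "0 < q" "q < 1"
  shows "k \<le> m \<Longrightarrow> S q a m k (m - k) = (\<Prod>t<k. - a * q ^ t) * qpoch q q m"
proof (induct k)
  case 0
  have "q ^ (m + 1) * inverse (q ^ m) = q"
    using assms by simp
  then have "S q a m 0 (m - 0) = qpoch q q m"
    by (simp only: S_0[OF assms] diff_zero)
  then show ?case by simp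
next
  case (Suc k)
  have "S q a m k (m - Suc k) = 0" "Suc (m - Suc k) = m - k"
    using S_vanish[OF assms] Suc by simp_all
  then show ?case using Suc by (simp add: S_Suc)
qed

section \<open>Orthogonal rows\<close>

definition orth_coeff :: "real \<Rightarrow> real \<Rightarrow> nat \<Rightarrow> nat \<Rightarrow> real" where
  "orth_coeff q a m j = q ^ j * qbin_coeff q m j / qpoch a q j"

lemma orth_coeff_vanish: "q \<noteq> 0 \<Longrightarrow> m < j \<Longrightarrow> orth_coeff q a m j = 0"
  by (simp add: orth_coeff_def qbin_coeff_vanish)

text \<open>Applying row \<open>m\<close> to column \<open>k\<close> of the Hankel matrix gives \<open>S(m,k,0)\<close>,
  because \<open>(a;q)_{j+k} = (a;q)_j (aq^j;q)_k\<close>.\<close>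
lemma orth_coeff_hankel:
  assumes "0 < q" "q < 1" "\<And>j. qpoch a q j \<noteq> 0" "m < N"
  shows "(\<Sum>j<N. orth_coeff q a m j * qpoch a q (j + k)) = S q a m k 0"
proof -
  have "(\<Sum>j<N. orth_coeff q a m j * qpoch a q (j + k))
      = (\<Sum>j\<le>m. orth_coeff q a m j * qpoch a q (j + k))"
    by (rule sum.mono_neutral_right) (use assms orth_coeff_vanish in auto)
  also have "\<dots> = S q a m k 0"
    unfolding S_def orth_coeff_def qpoch_add using assms(3) by (simp add: field_simps)
  finally show ?thesis .
qed

lemma orth_norm:
  assumes "0 < q" "q < 1" "\<And>j. qpoch a q j \<noteq> 0"
  shows "S q a m m 0 * orth_coeff q a m m = a ^ m * qpoch q q m / qpoch a q m"
proof -
  have "q ^ m * (\<Prod>t<m. - a * q ^ t) = (\<Prod>t<m. q * (- a * q ^ t))"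
    by (simp only: prod.distrib prod_constant card_lessThan)
  also have "\<dots> = (\<Prod>t<m. a * - (q ^ (t + 1)))"
    by (rule prod.cong) (simp_all add: algebra_simps)
  also have "\<dots> = a ^ m * (\<Prod>t<m. - (q ^ (t + 1)))"
    by (simp only: prod.distrib prod_constant card_lessThan)
  finally have "q ^ m * qpoch (inverse (q ^ m)) q m * (\<Prod>t<m. - a * q ^ t)
      = a ^ m * (qpoch (inverse (q ^ m)) q m * (\<Prod>t<m. - (q ^ (t + 1))))"
    by (metis mult.assoc mult.left_commute)
  also have "\<dots> = a ^ m * qpoch q q m"
    using qpoch_inverse_power_reflect[of q m] assms(1) by simp
  finally have "q ^ m * qpoch (inverse (q ^ m)) q m * (\<Prod>t<m. - a * q ^ t) = a ^ m * qpoch q q m" .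
  moreover have "qpoch q q m > 0"
    using assms qpoch_pos[of q q m] by simp
  ultimately show ?thesis
    using S_diagonal[OF assms(1,2), of m m a] assms(3)[of m]
    by (simp add: orth_coeff_def qbin_coeff_def field_simps)
qed

text \<open>Discrete orthogonality, for \<open>l \<le> m\<close>: the sum vanishes termwise unless
  \<open>k = l = m\<close>, since \<open>S(m,k,0) = 0\<close> for \<open>k < m\<close> and \<open>U_{l,k} = 0\<close> for \<open>k > l\<close>.\<close>
lemma orth_rows:
  assumes "0 < q" "q < 1" "\<And>j. qpoch a q j \<noteq> 0" "l \<le> m" "m < N"
  shows "(\<Sum>k\<in>{0..<N}. S q a m k 0 * orth_coeff q a l k)
           = (if l = m then a ^ m * qpoch q q m / qpoch a q m else 0)"
proof -
  have vanish: "S q a m k 0 * orth_coeff q a l k = 0" if "k \<noteq> m \<or> l \<noteq> m" for k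
  proof (cases "k < m")
    case True
    then show ?thesis using S_vanish[OF assms(1,2), of 0 k m a] by simp
  next
    case False
    then have "l < k" using that assms(4) by auto
    then show ?thesis using orth_coeff_vanish[of q l k a] assms(1) by simp
  qed
  then have "(\<Sum>k\<in>{0..<N}. S q a m k 0 * orth_coeff q a l k)
           = (\<Sum>k\<in>{m}. S q a m k 0 * orth_coeff q a l k)"
    by (intro sum.mono_neutral_right) (use assms in auto)
  then show ?thesis
    using orth_norm[OF assms(1-3), of m] vanish[of m] by auto
qed

text \<open>Term of the claimed inverse: \<open>U_{m,j} h_m^{-1} U_{m,k}\<close> written out, with
  \<open>(q^{-m};q)_j\<close> in the form \<open>q powr (-m)\<close> used by the theorem.\<close>
lemma orth_coeff_product:
  assumes "0 < q" "q < 1" "a \<noteq> 0" "\<And>j. qpoch a q j \<noteq> 0"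
  shows "orth_coeff q a m j * qpoch a q m * orth_coeff q a m k / (a ^ m * qpoch q q m)
    = q ^ (j + k) * qpoch a q m * qpoch (q powr (- real m)) q j * qpoch (q powr (- real m)) q k
      / (qpoch q q j * qpoch q q k * qpoch a q j * qpoch a q k * qpoch q q m * a ^ m)"
proof -
  have "q powr (- real m) = inverse (q ^ m)"
    using assms(1) by (simp add: powr_minus powr_realpow)
  moreover have "qpoch q q i \<noteq> 0" for i
    using assms(1,2) qpoch_pos[of q q i] by simp
  ultimately show ?thesis
    using assms(3,4) by (simp add: orth_coeff_def qbin_coeff_def power_add field_simps)
qed

lemma congruence_symmetric:
  fixes A U :: "'a :: comm_ring_1 mat"
  assumes "A \<in> carrier_mat n n" "U \<in> carrier_mat n n" "transpose_mat A = A"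
  shows "transpose_mat (U * A * transpose_mat U) = U * A * transpose_mat U"
proof -
  have "U * A \<in> carrier_mat n n" using assms by simp
  then have "transpose_mat (U * A * transpose_mat U) = U * transpose_mat (U * A)"
    using transpose_mult[of "U * A" n n "transpose_mat U" n] assms(2) by simp
  also have "transpose_mat (U * A) = A * transpose_mat U"
    using transpose_mult[OF assms(2,1)] assms(3) by simp
  also have "U * (A * transpose_mat U) = U * A * transpose_mat U"
    using assoc_mult_mat[of U n n A n "transpose_mat U" n] assms by simp
  finally show ?thesis .
qed

lemma inverse_from_congruence:
  fixes A U V C :: "'a :: field mat"
  assumes carrier: "A \<in> carrier_mat n n" "U \<in> carrier_mat n n" "V \<in> carrier_mat n n"
      "C \<in> carrier_mat n n"
    and inv: "U * A * V * C = 1\<^sub>m n"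
  shows "A * (V * C * U) = 1\<^sub>m n" "V * C * U * A = 1\<^sub>m n"
proof -
  have "U * (A * V * C) = 1\<^sub>m n"
    using inv carrier by (simp add: assoc_mult_mat[of _ n n _ n _ n])
  moreover have "A * V * C \<in> carrier_mat n n" using carrier by simp
  ultimately have "A * V * C * U = 1\<^sub>m n"
    using mat_mult_left_right_inverse[OF carrier(2)] by blast
  then show right: "A * (V * C * U) = 1\<^sub>m n"
    using carrier by (simp add: assoc_mult_mat[of _ n n _ n _ n])
  show "V * C * U * A = 1\<^sub>m n"
    using mat_mult_left_right_inverse[OF carrier(1) _ right] carrier by simp
qed

lemma transpose_diag_congruence_index:
  fixes f :: "nat \<Rightarrow> nat \<Rightarrow> 'a :: comm_ring_1"
  assumes "j < N" "k < N"
  shows "(transpose_mat (mat N N (\<lambda>(m, j). f m j)) * mat_diag N c * mat N N (\<lambda>(m, j). f m j)) $$ (j, k)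
           = (\<Sum>m<N. f m j * c m * f m k)"
  using assms
  by (simp add: mat_diag_mult_right[of _ N N] scalar_prod_def lessThan_atLeast0 case_prod_beta)

theorem hankel_orthogonality:
  fixes q a :: real and N :: nat
  assumes "0 < q" "q < 1" "\<And>j. qpoch a q j \<noteq> 0"
  defines "U \<equiv> mat N N (\<lambda>(m, j). orth_coeff q a m j)"
    and "A \<equiv> mat N N (\<lambda>(j, k). qpoch a q (j + k))"
  shows "U * A * transpose_mat U = mat_diag N (\<lambda>m. a ^ m * qpoch q q m / qpoch a q m)"
    (is "?G = mat_diag N ?h")
proof -
  have lower: "?G $$ (m, l) = mat_diag N ?h $$ (m, l)" if "l \<le> m" "m < N" for m l
  proof -
    have "?G $$ (m, l) = (\<Sum>k\<in>{0..<N}. (\<Sum>j<N. orth_coeff q a m j * qpoch a q (j + k))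
                                         * orth_coeff q a l k)"
      using that by (simp add: U_def A_def scalar_prod_def lessThan_atLeast0)
    also have "\<dots> = (\<Sum>k\<in>{0..<N}. S q a m k 0 * orth_coeff q a l k)"
      using orth_coeff_hankel[OF assms(1-3) that(2)] by simp
    finally show ?thesis
      using orth_rows[OF assms(1-3) that] that by (simp add: mat_diag_def)
  qed
  have symmetric: "transpose_mat ?G = ?G"
    by (rule congruence_symmetric[of _ N]) (auto simp: U_def A_def add.commute)
  show ?thesis
  proof (rule eq_matI)
    fix m l assume "m < dim_row (mat_diag N ?h)" "l < dim_col (mat_diag N ?h)"
    then have ml: "m < N" "l < N" by (simp_all add: mat_diag_def)
    show "?G $$ (m, l) = mat_diag N ?h $$ (m, l)"
    proof (cases "l \<le> m")
      case True
      then show ?thesis using lower ml by simp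
    next
      case False
      then have "?G $$ (m, l) = ?G $$ (l, m)"
        using ml arg_cong[OF symmetric, of "\<lambda>M. M $$ (l, m)"] by (simp add: U_def)
      then show ?thesis using lower[of m l] ml False by (simp add: mat_diag_def)
    qed
  qed (simp_all add: U_def A_def mat_diag_def)
qed

section \<open>The inverse of the Hankel matrix\<close>

theorem hankel_inverse:
  fixes q a :: real and N :: nat
  assumes "0 < q" "q < 1" "a \<noteq> 0" "\<And>j. qpoch a q j \<noteq> 0"
  defines "A \<equiv> mat N N (\<lambda>(j, k). qpoch a q (j + k))"
    and "B \<equiv> mat N N (\<lambda>(j, k). \<Sum>m<N.
            q ^ (j + k) * qpoch a q m * qpoch (q powr (- real m)) q j * qpoch (q powr (- real m)) q k
            / (qpoch q q j * qpoch q q k * qpoch a q j * qpoch a q k * qpoch q q m * a ^ m))"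
  shows "A * B = 1\<^sub>m N" "B * A = 1\<^sub>m N"
proof -
  define U where "U = mat N N (\<lambda>(m, j). orth_coeff q a m j)"
  define C where "C = mat_diag N (\<lambda>m. qpoch a q m / (a ^ m * qpoch q q m))"
  have "qpoch q q m \<noteq> 0" for m
    using qpoch_pos[of q q m] assms(1,2) by simp
  then have "U * A * transpose_mat U * C = mat_diag N (\<lambda>m. 1)"
    unfolding U_def A_def C_def hankel_orthogonality[OF assms(1,2,4)] mat_diag_diag
    using assms(3,4) by simp
  then have "A * (transpose_mat U * C * U) = 1\<^sub>m N" "transpose_mat U * C * U * A = 1\<^sub>m N"
    using inverse_from_congruence[of A N U "transpose_mat U" C] by (simp_all add: A_def U_def C_def)
  moreover have "B = transpose_mat U * C * U"
  proof (rule eq_matI)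
    fix j k assume "j < dim_row (transpose_mat U * C * U)" "k < dim_col (transpose_mat U * C * U)"
    then have jk: "j < N" "k < N" by (simp_all add: U_def)
    show "B $$ (j, k) = (transpose_mat U * C * U) $$ (j, k)"
      unfolding U_def C_def transpose_diag_congruence_index[OF jk]
      using jk by (simp add: B_def orth_coeff_product[OF assms(1-4)])
  qed (simp_all add: B_def U_def C_def)
  ultimately show "A * B = 1\<^sub>m N" "B * A = 1\<^sub>m N" by simp_all
qed

theorem mainTheorem12:
  fixes q \<alpha> :: real and n :: nat
  assumes "0 < q" "q < 1" "\<alpha> > -1"
  defines "A \<equiv> mat (n+1) (n+1) (\<lambda>(j,k). qpoch (q powr (\<alpha>+1)) q (j+k))"
      and "B \<equiv> mat (n+1) (n+1) (\<lambda>(j,k). \<Sum>m=0..n.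
              (q ^ (j+k) * qpoch (q powr (\<alpha>+1)) q m * qpoch (q powr (- real m)) q j
                 * qpoch (q powr (- real m)) q k) /
              (qpoch q q j * qpoch q q k * qpoch (q powr (\<alpha>+1)) q j
                 * qpoch (q powr (\<alpha>+1)) q k * qpoch q q m * q powr ((\<alpha>+1) * real m)))"
  shows "invertible_mat A \<and> A * B = 1\<^sub>m (n+1) \<and> B * A = 1\<^sub>m (n+1)"
proof -
  define a where "a = q powr (\<alpha> + 1)"
  have a: "0 < a" "a < 1"
    using powr_less_mono'[OF assms(1,2), of 0 "\<alpha> + 1"] assms by (simp_all add: a_def)
  have "q powr ((\<alpha> + 1) * real m) = a ^ m" for m
    using a(1) by (simp add: a_def powr_powr[symmetric] powr_realpow)
  then have B_a: "B = mat (n+1) (n+1) (\<lambda>(j, k). \<Sum>m<n+1.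
            q ^ (j + k) * qpoch a q m * qpoch (q powr (- real m)) q j * qpoch (q powr (- real m)) q k
            / (qpoch q q j * qpoch q q k * qpoch a q j * qpoch a q k * qpoch q q m * a ^ m))"
    by (simp add: B_def a_def[symmetric] atLeast0AtMost lessThan_Suc_atMost)
  have "qpoch a q j \<noteq> 0" for j
    using qpoch_pos[of a q j] a assms(1,2) by simp
  then have "A * B = 1\<^sub>m (n+1)" "B * A = 1\<^sub>m (n+1)"
    using hankel_inverse[OF assms(1,2), of a "n+1"] a(1) unfolding A_def B_a a_def by simp_all
  then show ?thesis
    unfolding invertible_mat_def inverts_mat_def
    by (auto intro!: exI[of _ B] simp: A_def B_def)
qed

end
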